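(* Let $n\ge3$ and $R$ a commutative ring containing an invertible element $v$. In $D_n$, for every $i$ (indices modulo $n$), $$E_{\overline{i+2}}E_{\overline{i+3}}\cdots E_{\overline{i+n}}=u^2E_i,$$ where the left side is the product of the $n-1$ elements $E_{\overline{i+2}},E_{\overline{i+3}},\dots,E_{\overline{i+n}}=E_{\bar i}$ in this order.
   Context: An affine $n$-diagram consists of the nodes $\mathbb{Z}\times\{0,1\}\subset\mathbb{R}^2$ (bottom row $\mathbb{Z}\times\{0\}$, top row $\mathbb{Z}\times\{1\}$) together with curves called edges such that: every node is an endpoint of exactly one edge; edges lie in $\mathbb{R}\times[0,1]$; an edge not joining two nodes is an infinite horizontal line meeting no node, and there are finitely many such; no two edges intersect; the diagram is invariant under horizontal translation by $n$. Diagrams are taken up to isotopy. The product $AB$: place $A$ on top of $B$, identify the bottom row of $A$ with the top row of $B$, remove the $x$ closed loops formed to get a diagram $C$; $AB=(v+v^{-1})^xC$. $D_n$ is the $R$-algebra with basis the affine $n$-diagrams and this product. $u$ is the diagram joining each bottom node $(j,0)$ to the top node $(j+1,1)$ by a straight segment. For $1\le i\le n$, $E_i$ is the diagram having, for each $k\equiv i\pmod n$, minimal horizontal edges joining $(k,1)$ to $(k+1,1)$ and $(k,0)$ to $(k+1,0)$, and straight vertical edges joining $(j,0)$ to $(j,1)$ for all $j\not\equiv i,i+1\pmod n$; $\bar i$ denotes the residue of $i$ mod $n$. *)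

theory Defs
  imports Main
begin

text \<open>A node (j, r) stands for (j,1) (top row) if r = True and (j,0) (bottom row) if r = False.
  An affine diagram up to isotopy is encoded by the matching M (M x is the other endpoint of
  the edge at x) together with the number l of infinite horizontal lines.\<close>

type_synonym node = "int \<times> bool"
type_synonym dgm = "(node \<Rightarrow> node) \<times> nat"

text \<open>Order of the nodes along the boundary of the strip (bottom row left to right, then top
  row right to left); a family of disjoint curves in the strip joining nodes exists iff the
  matching is non-interleaving w.r.t. this order.\<close>
definition node_less :: "node \<Rightarrow> node \<Rightarrow> bool" where
  "node_less x y = (case (x, y) of
      ((j, False), (k, False)) \<Rightarrow> j < k
    | ((j, False), (k, True)) \<Rightarrow> True
    | ((j, True), (k, False)) \<Rightarrow> False
    | ((j, True), (k, True)) \<Rightarrow> k < j)"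

definition affine_diagram :: "nat \<Rightarrow> dgm \<Rightarrow> bool" where
  "affine_diagram n d = (let M = fst d; l = snd d in
      (\<forall>x. M x \<noteq> x \<and> M (M x) = x)
    \<and> (\<forall>j r. M (j + int n, r) = (fst (M (j, r)) + int n, snd (M (j, r))))
    \<and> (\<forall>x y. node_less x (M x) \<and> node_less y (M y) \<longrightarrow>
          \<not> (node_less x y \<and> node_less y (M x) \<and> node_less (M x) (M y)))
    \<and> (l > 0 \<longrightarrow> (\<forall>j. snd (M (j, True)) = True)))"

text \<open>Nodes of the stacked picture: top row of A, middle row (bottom of A = top of B),
  bottom row of B.\<close>
datatype cnode = Top int | Mid int | Bot int

fun cshift :: "int \<Rightarrow> cnode \<Rightarrow> cnode" where
  "cshift m (Top j) = Top (j + m)"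
| "cshift m (Mid j) = Mid (j + m)"
| "cshift m (Bot j) = Bot (j + m)"

fun is_outer :: "cnode \<Rightarrow> bool" where
  "is_outer (Mid j) = False"
| "is_outer _ = True"

fun liftA :: "node \<Rightarrow> cnode" where
  "liftA (j, r) = (if r then Top j else Mid j)"

fun liftB :: "node \<Rightarrow> cnode" where
  "liftB (j, r) = (if r then Mid j else Bot j)"

fun unlift :: "cnode \<Rightarrow> node" where
  "unlift (Top j) = (j, True)"
| "unlift (Bot j) = (j, False)"
| "unlift (Mid j) = (j, True)"

fun nbrA :: "(node \<Rightarrow> node) \<Rightarrow> cnode \<Rightarrow> cnode option" where
  "nbrA MA (Top j) = Some (liftA (MA (j, True)))"
| "nbrA MA (Mid j) = Some (liftA (MA (j, False)))"
| "nbrA MA (Bot j) = None"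

fun nbrB :: "(node \<Rightarrow> node) \<Rightarrow> cnode \<Rightarrow> cnode option" where
  "nbrB MB (Top j) = None"
| "nbrB MB (Mid j) = Some (liftB (MB (j, True)))"
| "nbrB MB (Bot j) = Some (liftB (MB (j, False)))"

definition cadj :: "(node \<Rightarrow> node) \<Rightarrow> (node \<Rightarrow> node) \<Rightarrow> cnode \<Rightarrow> cnode \<Rightarrow> bool" where
  "cadj MA MB x y = (nbrA MA x = Some y \<or> nbrB MB x = Some y)"

definition cconn :: "(node \<Rightarrow> node) \<Rightarrow> (node \<Rightarrow> node) \<Rightarrow> cnode \<Rightarrow> cnode \<Rightarrow> bool" where
  "cconn MA MB = (cadj MA MB)\<^sup>*\<^sup>*"

definition comp_match :: "(node \<Rightarrow> node) \<Rightarrow> (node \<Rightarrow> node) \<Rightarrow> node \<Rightarrow> node" where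
  "comp_match MA MB p = (let x = (if snd p then Top (fst p) else Bot (fst p)) in
     unlift (THE y. is_outer y \<and> y \<noteq> x \<and> cconn MA MB x y))"

text \<open>Components consisting of middle nodes only (closed loops if finite, new horizontal lines
  if infinite), counted up to the translation by n.\<close>
definition mid_comps :: "(node \<Rightarrow> node) \<Rightarrow> (node \<Rightarrow> node) \<Rightarrow> cnode set set" where
  "mid_comps MA MB = {Collect (cconn MA MB (Mid k)) | k.
      \<forall>y. cconn MA MB (Mid k) y \<longrightarrow> \<not> is_outer y}"

definition num_orbits :: "nat \<Rightarrow> cnode set set \<Rightarrow> nat" where
  "num_orbits n S = card ((\<lambda>C. {cshift (int n * m) ` C | m. True}) ` S)"

text \<open>compose n A B = (x, C) where AB = (v + v^-1)^x C.\<close>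
definition compose :: "nat \<Rightarrow> dgm \<Rightarrow> dgm \<Rightarrow> nat \<times> dgm" where
  "compose n A B = (let MA = fst A; MB = fst B in
     (num_orbits n {C \<in> mid_comps MA MB. finite C},
      (comp_match MA MB,
       snd A + snd B + num_orbits n {C \<in> mid_comps MA MB. infinite C})))"

text \<open>Elements of D_n: finitely supported R-valued functions on diagrams (coefficients w.r.t.
  the diagram basis). The product is the bilinear extension of the diagram product, with
  closed loops evaluated to delta = v + v^-1.\<close>
definition dsupp :: "(dgm \<Rightarrow> 'a::zero) \<Rightarrow> dgm set" where
  "dsupp f = {d. f d \<noteq> 0}"

definition dbasis :: "dgm \<Rightarrow> dgm \<Rightarrow> 'a::{zero,one}" where
  "dbasis d = (\<lambda>e. if e = d then 1 else 0)"

definition dmult :: "nat \<Rightarrow> 'a::comm_ring_1 \<Rightarrow> (dgm \<Rightarrow> 'a) \<Rightarrow> (dgm \<Rightarrow> 'a) \<Rightarrow> dgm \<Rightarrow> 'a" where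
  "dmult n \<delta> f g = (\<lambda>d. \<Sum>p \<in> dsupp f \<times> dsupp g.
      (if snd (compose n (fst p) (snd p)) = d
       then f (fst p) * g (snd p) * \<delta> ^ fst (compose n (fst p) (snd p)) else 0))"

fun dprod :: "nat \<Rightarrow> 'a::comm_ring_1 \<Rightarrow> (dgm \<Rightarrow> 'a) list \<Rightarrow> dgm \<Rightarrow> 'a" where
  "dprod n \<delta> [] = undefined"
| "dprod n \<delta> [x] = x"
| "dprod n \<delta> (x # y # ys) = dmult n \<delta> x (dprod n \<delta> (y # ys))"

definition u_dgm :: dgm where
  "u_dgm = ((\<lambda>(j, r). if r then (j - 1, False) else (j + 1, True)), 0)"

definition E_dgm :: "nat \<Rightarrow> int \<Rightarrow> dgm" where
  "E_dgm n i = ((\<lambda>(k, r).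
      if k mod int n = i mod int n then (k + 1, r)
      else if k mod int n = (i + 1) mod int n then (k - 1, r)
      else (k, \<not> r)), 0)"

end

theory Submission
  imports Defs
begin

(* Composing diagrams amounts to following paths through the stacked picture; a walk from an
   outer node through middle nodes whose node set is closed under adjacency identifies the
   partner of that node. With such explicit walks one checks, by induction on L, that for
   1 <= L <= n - 1 the product E_a E_{a+1} ... E_{a+L-1} is a single diagram whose matching only
   depends on the position of a node relative to a modulo n, and that for L = n - 1, a = i + 2
   this is also the matching of u^2 E_i. No closed loops or new horizontal lines arise, so the
   value of v + v^-1, and the invertibility of v, play no role. *)

fun cwalk :: "(node \<Rightarrow> node) \<Rightarrow> (node \<Rightarrow> node) \<Rightarrow> cnode list \<Rightarrow> bool" where
  "cwalk MA MB [] \<longleftrightarrow> True"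
| "cwalk MA MB [x] \<longleftrightarrow> True"
| "cwalk MA MB (x # y # zs) \<longleftrightarrow> cadj MA MB x y \<and> cwalk MA MB (y # zs)"

lemma cwalk_cconn_last: "cwalk MA MB (x # zs) \<Longrightarrow> cconn MA MB x (last (x # zs))"
  by (induction zs arbitrary: x)
    (auto simp: cconn_def intro: converse_rtranclp_into_rtranclp)

definition adj_closed :: "(node \<Rightarrow> node) \<Rightarrow> (node \<Rightarrow> node) \<Rightarrow> cnode set \<Rightarrow> bool" where
  "adj_closed MA MB S \<longleftrightarrow> (\<forall>z\<in>S. \<forall>w. cadj MA MB z w \<longrightarrow> w \<in> S)"

lemma adj_closed_cconn:
  assumes "adj_closed MA MB S" "x \<in> S" "cconn MA MB x y"
  shows "y \<in> S"
  using assms(3,2) unfolding cconn_def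
  by (induction rule: rtranclp_induct) (use assms(1) in \<open>auto simp: adj_closed_def\<close>)

(* Certificate for the partner of the outer node x: as the node set of the walk is closed under
   adjacency, it contains the whole component of x. *)
definition exit_walk ::
    "(node \<Rightarrow> node) \<Rightarrow> (node \<Rightarrow> node) \<Rightarrow> cnode \<Rightarrow> cnode list \<Rightarrow> cnode \<Rightarrow> bool" where
  "exit_walk MA MB x ws y \<longleftrightarrow> cwalk MA MB (x # ws @ [y]) \<and> is_outer y \<and> y \<noteq> x
     \<and> (\<forall>w\<in>set ws. \<not> is_outer w) \<and> adj_closed MA MB (set (x # ws @ [y]))"

lemma the_outer_partner_eq:
  assumes "exit_walk MA MB x ws y"
  shows "(THE z. is_outer z \<and> z \<noteq> x \<and> cconn MA MB x z) = y"
proof (rule the_equality)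
  show "is_outer y \<and> y \<noteq> x \<and> cconn MA MB x y"
    using assms cwalk_cconn_last[of MA MB x "ws @ [y]"] by (simp add: exit_walk_def)
next
  fix z assume "is_outer z \<and> z \<noteq> x \<and> cconn MA MB x z"
  then show "z = y"
    using assms adj_closed_cconn[of MA MB "set (x # ws @ [y])" x z] by (auto simp: exit_walk_def)
qed

fun outer :: "node \<Rightarrow> cnode" where
  "outer (j, r) = (if r then Top j else Bot j)"

lemma compose_eqI:
  assumes "\<And>k. \<exists>zs. cwalk MA MB (Mid k # zs) \<and> is_outer (last (Mid k # zs))"
    and "\<And>k. \<exists>ws. exit_walk MA MB (Top k) ws (outer (C (k, True)))"
    and "\<And>k. \<exists>ws. exit_walk MA MB (Bot k) ws (outer (C (k, False)))"
  shows "compose n (MA, lA) (MB, lB) = (0, (C, lA + lB))"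
proof -
  have "mid_comps MA MB = {}"
    using assms(1) cwalk_cconn_last unfolding mid_comps_def by blast
  moreover have "comp_match MA MB p = C p" for p
  proof -
    have "unlift (outer (C p)) = C p" by (cases "C p") simp
    moreover obtain k r where "p = (k, r)" by fastforce
    ultimately show ?thesis
      using assms(2,3)[of k] the_outer_partner_eq by (cases r) (auto simp: comp_match_def)
  qed
  ultimately show ?thesis by (simp add: compose_def num_orbits_def fun_eq_iff)
qed

lemma dmult_dbasis:
  "dmult n \<delta> (dbasis A) (dbasis B)
     = (\<lambda>d. \<delta> ^ fst (compose n A B) * dbasis (snd (compose n A B)) d :: 'a::comm_ring_1)"
proof (cases "(1::'a) = 0")
  case True
  then have "x = 0" for x :: 'a by (metis mult_1 mult_zero_left)
  then show ?thesis by (metis ext)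
next
  case False
  then have "dsupp (dbasis d :: dgm \<Rightarrow> 'a) = {d}" for d by (auto simp: dsupp_def dbasis_def)
  then show ?thesis by (auto simp: dmult_def dbasis_def fun_eq_iff)
qed

lemma dmult_dbasis_loop_free:
  "compose n A B = (0, C) \<Longrightarrow>
     dmult n \<delta> (dbasis A) (dbasis B) = (dbasis C :: dgm \<Rightarrow> 'a::comm_ring_1)"
  by (simp add: dmult_dbasis)

lemma dprod_Cons: "xs \<noteq> [] \<Longrightarrow> dprod n \<delta> (x # xs) = dmult n \<delta> x (dprod n \<delta> xs)"
  by (cases xs) simp_all

definition shift_match :: "int \<Rightarrow> node \<Rightarrow> node" where
  "shift_match d = (\<lambda>(j, r). if r then (j - d, False) else (j + d, True))"

lemmas walk_simps = exit_walk_def adj_closed_def cadj_def imp_disjL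

lemma compose_shift_match:
  "compose n (shift_match c, l) (shift_match d, l') = (0, (shift_match (c + d), l + l'))"
proof (rule compose_eqI)
  show "\<exists>zs. cwalk (shift_match c) (shift_match d) (Mid k # zs) \<and> is_outer (last (Mid k # zs))" for k
    by (rule exI[of _ "[Top (k + c)]"]) (simp add: cadj_def shift_match_def)
  show "\<exists>ws. exit_walk (shift_match c) (shift_match d) (Top k) ws
          (outer (shift_match (c + d) (k, True)))" for k
    by (rule exI[of _ "[Mid (k - c)]"]) (simp add: walk_simps shift_match_def)
  show "\<exists>ws. exit_walk (shift_match c) (shift_match d) (Bot k) ws
          (outer (shift_match (c + d) (k, False)))" for k
    by (rule exI[of _ "[Mid (k + d)]"]) (simp add: walk_simps shift_match_def)
qed

definition offset :: "nat \<Rightarrow> int \<Rightarrow> int \<Rightarrow> int" where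
  "offset n a k = (k - a) mod int n"

lemma offset_bounds: "0 < n \<Longrightarrow> 0 \<le> offset n a k \<and> offset n a k < int n"
  by (simp add: offset_def)

lemma offset_shift: "offset n a (k + c) = (offset n a k + c) mod int n"
  by (simp add: offset_def mod_simps algebra_simps)

lemma offset_base_pred: "offset n (a - 1) k = offset n a (k + 1)"
  by (simp add: offset_def algebra_simps)

lemma offset_base_add2: "offset n (a + 2) k = offset n a (k - 2)"
  by (simp add: offset_def algebra_simps)

lemma mod_eq_sub_self: "N \<le> x \<Longrightarrow> x < 2 * N \<Longrightarrow> x mod N = x - N" for x N :: int
  using mod_pos_pos_trivial[of "x - N" N] by simp

lemma mod_eq_add_self: "- N \<le> x \<Longrightarrow> x < 0 \<Longrightarrow> x mod N = x + N" for x N :: int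
  using mod_pos_pos_trivial[of "x + N" N] by simp

lemma offset_succ:
  "0 < n \<Longrightarrow> offset n a (k + 1) = (if offset n a k = int n - 1 then 0 else offset n a k + 1)"
  using offset_bounds[of n a k] unfolding offset_shift by (auto simp: mod_eq_sub_self)

lemma offset_pred:
  "0 < n \<Longrightarrow> offset n a (k - 1) = (if offset n a k = 0 then int n - 1 else offset n a k - 1)"
  using offset_bounds[of n a k] offset_shift[of n a k "-1"] by (auto simp: mod_eq_add_self)

lemma offset_add2:
  "2 \<le> n \<Longrightarrow> offset n a (k + 2) =
     (if offset n a k = int n - 1 then 1 else if offset n a k = int n - 2 then 0 else offset n a k + 2)"
  using offset_bounds[of n a k] unfolding offset_shift by (auto simp: mod_eq_sub_self)

lemma offset_diff2:
  "2 \<le> n \<Longrightarrow> offset n a (k - 2) =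
     (if offset n a k = 0 then int n - 2 else if offset n a k = 1 then int n - 1 else offset n a k - 2)"
  using offset_bounds[of n a k] offset_shift[of n a k "-2"] by (auto simp: mod_eq_add_self)

definition E_match :: "nat \<Rightarrow> int \<Rightarrow> node \<Rightarrow> node" where
  "E_match n a = (\<lambda>(k, r).
     if offset n a k = 0 then (k + 1, r) else if offset n a k = 1 then (k - 1, r) else (k, \<not> r))"

lemma E_dgm_eq_E_match:
  assumes n: "2 \<le> n"
  shows "E_dgm n a = (E_match n a, 0)"
proof -
  have base: "(k mod int n = a mod int n) = (offset n a k = 0)" for k
    by (simp add: offset_def mod_eq_dvd_iff dvd_eq_mod_eq_0)
  have succ: "(k mod int n = (a + 1) mod int n) = (offset n a k = 1)" for k
  proof -
    have "(k mod int n = (a + 1) mod int n) = ((k - a) mod int n = 1 mod int n)"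
      by (simp add: mod_eq_dvd_iff algebra_simps)
    then show ?thesis using n by (simp add: offset_def)
  qed
  show ?thesis unfolding E_dgm_def E_match_def base succ ..
qed

(* Used instead of the definition when E_match n (a - 1) meets E_run_match n a: all offsets in
   the walk computations are then taken relative to the same base a. *)
lemma E_match_pred:
  "0 < n \<Longrightarrow> E_match n (a - 1) (k, r) =
     (if offset n a k = int n - 1 then (k + 1, r) else if offset n a k = 0 then (k - 1, r) else (k, \<not> r))"
  using offset_bounds[of n a k] by (auto simp: E_match_def offset_base_pred offset_succ)

(* The matching of E_a E_{a+1} ... E_{a+L-1} for 1 <= L <= n - 1. *)
definition E_run_match :: "nat \<Rightarrow> int \<Rightarrow> int \<Rightarrow> node \<Rightarrow> node" where
  "E_run_match n a L = (\<lambda>(k, r). if r then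
       (if offset n a k = 0 then (k + 1, True) else if offset n a k = 1 then (k - 1, True)
        else if offset n a k \<le> L then (k - 2, False) else (k, False))
     else
       (if offset n a k = L - 1 then (k + 1, False) else if offset n a k = L then (k - 1, False)
        else if offset n a k \<le> L - 2 then (k + 2, True) else (k, True)))"

lemma E_run_match_one: "0 < n \<Longrightarrow> E_run_match n a 1 = E_match n a"
proof
  fix p :: node assume "0 < n"
  then show "E_run_match n a 1 p = E_match n a p"
    using offset_bounds[of n a "fst p"] by (cases p) (auto simp: E_run_match_def E_match_def)
qed

lemmas E_run_simps = walk_simps shift_match_def E_run_match_def
  offset_succ offset_pred offset_add2 offset_diff2 offset_base_add2

lemma compose_shift2_E_match:
  assumes n: "3 \<le> n"
  shows "compose n (shift_match 2, l) (E_match n a, l') = (0, (E_run_match n (a + 2) (int n - 1), l + l'))"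
proof (rule compose_eqI)
  show "\<exists>zs. cwalk (shift_match 2) (E_match n a) (Mid k # zs) \<and> is_outer (last (Mid k # zs))" for k
    by (rule exI[of _ "[Top (k + 2)]"]) (simp add: cadj_def shift_match_def)
next
  fix k :: int
  obtain j where k: "k = j + 2" by (metis diff_add_cancel)
  have b: "0 \<le> offset n a j" "offset n a j < int n" using offset_bounds[of n a j] n by auto
  consider "offset n a j = 0" | "offset n a j = 1" | "2 \<le> offset n a j" using b by linarith
  then show "\<exists>ws. exit_walk (shift_match 2) (E_match n a) (Top k) ws
      (outer (E_run_match n (a + 2) (int n - 1) (k, True)))"
  proof cases
    case 1 then show ?thesis using n b k
      by (intro exI[of _ "[Mid j, Mid (j + 1)]"]) (simp add: E_run_simps E_match_def)
  next
    case 2 then show ?thesis using n b k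
      by (intro exI[of _ "[Mid j, Mid (j - 1)]"]) (simp add: E_run_simps E_match_def)
  next
    case 3 then show ?thesis using n b k
      by (intro exI[of _ "[Mid j]"]) (simp add: E_run_simps E_match_def)
  qed
next
  fix k :: int
  have b: "0 \<le> offset n a k" "offset n a k < int n" using offset_bounds[of n a k] n by auto
  consider "offset n a k = 0" | "offset n a k = 1" | "2 \<le> offset n a k" using b by linarith
  then show "\<exists>ws. exit_walk (shift_match 2) (E_match n a) (Bot k) ws
      (outer (E_run_match n (a + 2) (int n - 1) (k, False)))"
  proof cases
    case 1 then show ?thesis using n b
      by (intro exI[of _ "[]"]) (simp add: E_run_simps E_match_def)
  next
    case 2 then show ?thesis using n b
      by (intro exI[of _ "[]"]) (simp add: E_run_simps E_match_def)
  next
    case 3 then show ?thesis using n b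
      by (intro exI[of _ "[Mid k]"]) (simp add: E_run_simps E_match_def)
  qed
qed

lemma compose_E_match_E_run:
  assumes n: "3 \<le> n" and L: "1 \<le> L" "L \<le> int n - 2"
  shows "compose n (E_match n (a - 1), l) (E_run_match n a L, l')
    = (0, (E_run_match n (a - 1) (L + 1), l + l'))"
proof (rule compose_eqI)
  fix k
  have b: "0 \<le> offset n a k" "offset n a k < int n" using offset_bounds[of n a k] n by auto
  consider "offset n a k = int n - 1" | "offset n a k = 0"
    | "1 \<le> offset n a k" "offset n a k \<le> int n - 2"
    using b by linarith
  then show "\<exists>zs. cwalk (E_match n (a - 1)) (E_run_match n a L) (Mid k # zs)
      \<and> is_outer (last (Mid k # zs))"
  proof cases
    case 1 then show ?thesis using n L b
      by (intro exI[of _ "[Bot k]"]) (simp add: E_run_simps E_match_pred offset_base_pred)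
  next
    case 2 then show ?thesis using n L b
      by (intro exI[of _ "[Mid (k - 1), Bot (k - 1)]"]) (simp add: E_run_simps E_match_pred offset_base_pred)
  next
    case 3 then show ?thesis using n L b
      by (intro exI[of _ "[Top k]"]) (simp add: E_run_simps E_match_pred offset_base_pred)
  qed
next
  fix k
  have b: "0 \<le> offset n a k" "offset n a k < int n" using offset_bounds[of n a k] n by auto
  consider "offset n a k = int n - 1" | "offset n a k = 0" | "offset n a k = 1"
    | "2 \<le> offset n a k" "offset n a k \<le> int n - 2" using b by linarith
  then show "\<exists>ws. exit_walk (E_match n (a - 1)) (E_run_match n a L) (Top k) ws
      (outer (E_run_match n (a - 1) (L + 1) (k, True)))"
  proof cases
    case 1 then show ?thesis using n L b
      by (intro exI[of _ "[]"]) (simp add: E_run_simps E_match_pred offset_base_pred)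
  next
    case 2 then show ?thesis using n L b
      by (intro exI[of _ "[]"]) (simp add: E_run_simps E_match_pred offset_base_pred)
  next
    case 3 then show ?thesis using n L b
      by (intro exI[of _ "[Mid k, Mid (k - 1), Mid (k - 2)]"]) (simp add: E_run_simps E_match_pred offset_base_pred)
  next
    case 4 then show ?thesis using n L b
      by (intro exI[of _ "[Mid k]"]) (simp add: E_run_simps E_match_pred offset_base_pred)
  qed
next
  fix k
  have b: "0 \<le> offset n a k" "offset n a k < int n" using offset_bounds[of n a k] n by auto
  consider "offset n a k = L - 1" | "offset n a k = L" | "offset n a k \<le> L - 2"
    | "offset n a k = int n - 1" | "L + 1 \<le> offset n a k" "offset n a k \<le> int n - 2" using b by linarith
  then show "\<exists>ws. exit_walk (E_match n (a - 1)) (E_run_match n a L) (Bot k) ws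
      (outer (E_run_match n (a - 1) (L + 1) (k, False)))"
  proof cases
    case 1 then show ?thesis using n L b
      by (intro exI[of _ "[]"]) (simp add: E_run_simps E_match_pred offset_base_pred)
  next
    case 2 then show ?thesis using n L b
      by (intro exI[of _ "[]"]) (simp add: E_run_simps E_match_pred offset_base_pred)
  next
    case 3 then show ?thesis using n L b
      by (intro exI[of _ "[Mid (k + 2)]"]) (simp add: E_run_simps E_match_pred offset_base_pred)
  next
    case 4 then show ?thesis using n L b
      by (intro exI[of _ "[Mid k, Mid (k + 1), Mid (k + 2)]"]) (simp add: E_run_simps E_match_pred offset_base_pred)
  next
    case 5 then show ?thesis using n L b
      by (intro exI[of _ "[Mid k]"]) (simp add: E_run_simps E_match_pred offset_base_pred)
  qed
qed

lemma dprod_E_dgm_eq_E_run: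
  fixes \<delta> :: "'a::comm_ring_1"
  assumes n: "3 \<le> n" and L: "1 \<le> L" "L < n"
  shows "dprod n \<delta> (map (\<lambda>j. dbasis (E_dgm n (a + int j))) [m..<m + L])
    = dbasis (E_run_match n (a + int m) (int L), 0)"
  using L
proof (induction L arbitrary: m rule: nat_induct_at_least)
  case base
  then show ?case using n by (simp add: E_dgm_eq_E_match E_run_match_one)
next
  case (Suc L)
  have "[m..<m + Suc L] = m # [Suc m..<Suc m + L]" "[Suc m..<Suc m + L] \<noteq> []"
    using Suc by (simp_all add: upt_rec)
  with Suc.IH[of "Suc m"] have "dprod n \<delta> (map (\<lambda>j. dbasis (E_dgm n (a + int j))) [m..<m + Suc L])
      = dmult n \<delta> (dbasis (E_match n (a + int m), 0))
          (dbasis (E_run_match n (a + int (Suc m)) (int L), 0))"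
    using n Suc.prems by (simp add: dprod_Cons E_dgm_eq_E_match del: upt_Suc)
  also have "\<dots> = dbasis (E_run_match n (a + int m) (int (Suc L)), 0)"
    using compose_E_match_E_run[where L = "int L" and a = "a + int (Suc m)" and l = 0 and l' = 0] n Suc
    by (intro dmult_dbasis_loop_free) (simp add: ac_simps)
  finally show ?case .
qed

theorem lemma2p3p2:
  fixes v vi :: "'a::comm_ring_1" and n :: nat and i :: int
  assumes "n \<ge> 3" and "v * vi = 1"
  shows "dprod n (v + vi) (map (\<lambda>j. dbasis (E_dgm n (i + int j))) [2..<n+1])
       = dmult n (v + vi) (dmult n (v + vi) (dbasis u_dgm) (dbasis u_dgm)) (dbasis (E_dgm n i))"
proof -
  have "[2..<n+1] = [2..<2 + (n - 1)]" using assms(1) by simp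
  then have lhs: "dprod n (v + vi) (map (\<lambda>j. dbasis (E_dgm n (i + int j))) [2..<n+1])
      = dbasis (E_run_match n (i + 2) (int n - 1), 0)"
    using dprod_E_dgm_eq_E_run[of n "n - 1" "v + vi" i 2] assms(1) by simp
  have "u_dgm = (shift_match 1, 0)" by (simp add: u_dgm_def shift_match_def)
  then have "dmult n (v + vi) (dbasis u_dgm) (dbasis u_dgm) = dbasis (shift_match 2, 0)"
    using compose_shift_match[of n 1 0 1 0] by (simp add: dmult_dbasis_loop_free)
  then show ?thesis
    using lhs compose_shift2_E_match[where a = i and l = 0 and l' = 0] assms(1)
    by (simp add: E_dgm_eq_E_match dmult_dbasis_loop_free)
qed

end
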